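(* Let $\lambda$ be a singular cardinal of countable cofinality, $\kappa>\lambda$ a regular cardinal, and $X=(f_\alpha)_{\alpha<\kappa}$ a $\kappa$-scale for $T_\lambda$. Let $T$ be the down-closure of $X$ in $T_\lambda$ (a $\lambda$-tree with tops $X$). Then for every $T$-graph $G'$, the bipartite graph with bipartition classes $T^{<\omega}$ and $X$ formed by the edges of $G'$ between these sets is a $(\lambda,\kappa)$-graph that has no $(\aleph_0,\kappa)$-subgraph.
   Context: $T_\lambda$ is the order tree of all sequences of elements of $\lambda$ of length at most $\omega$, ordered by initial segment; its elements of length $\omega$ are called tops; $T^{<\omega}$ denotes the finite sequences in $T$. An ideal on $\mathbb{N}$ is a proper subset of $\mathcal{P}(\mathbb{N})$ containing $\emptyset$ and closed under finite unions and subsets. For an ideal $I$ and $f,g:\mathbb{N}\to\lambda$, write $f<_I g$ if $\{n : f(n)\ge g(n)\}\in I$. A $\kappa$-scale for $T_\lambda$ is a family $(f_\alpha)_{\alpha<\kappa}$ of tops for which there exist a strictly increasing sequence $(\lambda_n)_{n\in\mathbb{N}}$ of uncountable regular cardinals with supremum $\lambda$ such that $f_\alpha(n)<\lambda_n$ for all $\alpha,n$, and an ideal $I$ on $\mathbb{N}$ containing all finite sets, such that $f_\alpha<_I f_\beta$ whenever $\alpha<\beta<\kappa$, and for every $g\in\prod_n\lambda_n$ there is $\alpha<\kappa$ with $g<_I f_\alpha$. A $T$-graph is a graph with vertex set $T$ whose edges join comparable points and in which for every $t$ the neighbours of $t$ below $t$ are cofinal in $\{s : s<t\}$. For infinite cardinals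 $\lambda'<\kappa$, a $(\lambda',\kappa)$-graph is a bipartite graph $(A,B)$ with $|A|=\lambda'$, $|B|=\kappa$, each $b\in B$ having infinitely many neighbours in $A$; an $(\aleph_0,\kappa)$-subgraph of $(A,B)$ is a subgraph $(C,D)$ with $C\subseteq A$, $D\subseteq B$ that is an $(\aleph_0,\kappa)$-graph. *)

theory Defs
  imports Main "HOL-Library.Countable_Set" "HOL-Library.Sublist"
begin

text \<open>Cardinals are represented by cardinal-order relations (Main's BNF cardinal library).
  A cardinal lam is a relation with Card_order lam; its elements (ordinals below lam)
  are the members of Field lam, ordered by lam.\<close>

definition reg_uncountable_card_pt :: "'a rel \<Rightarrow> 'a \<Rightarrow> bool" where
  "reg_uncountable_card_pt lam x \<longleftrightarrow>
     x \<in> Field lam \<and>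
     Card_order (Restr lam (underS lam x)) \<and>
     regularCard (Restr lam (underS lam x)) \<and>
     \<not> countable (underS lam x)"

definition ideal_nat :: "nat set set \<Rightarrow> bool" where
  "ideal_nat I \<longleftrightarrow> I \<noteq> Pow UNIV \<and> {} \<in> I \<and>
     (\<forall>A\<in>I. \<forall>B\<in>I. A \<union> B \<in> I) \<and> (\<forall>A\<in>I. \<forall>B. B \<subseteq> A \<longrightarrow> B \<in> I)"

definition less_mod :: "'a rel \<Rightarrow> nat set set \<Rightarrow> (nat \<Rightarrow> 'a) \<Rightarrow> (nat \<Rightarrow> 'a) \<Rightarrow> bool" where
  "less_mod lam I f g \<longleftrightarrow> {n. (g n, f n) \<in> lam} \<in> I"

definition is_scale :: "'a rel \<Rightarrow> 'k rel \<Rightarrow> ('k \<Rightarrow> nat \<Rightarrow> 'a) \<Rightarrow> bool" where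
  "is_scale lam kap f \<longleftrightarrow>
     (\<exists>ln :: nat \<Rightarrow> 'a. \<exists>I.
        (\<forall>n. reg_uncountable_card_pt lam (ln n)) \<and>
        (\<forall>n. ln n \<in> underS lam (ln (Suc n))) \<and>
        (\<forall>a\<in>Field lam. \<exists>n. (a, ln n) \<in> lam) \<and>
        (\<forall>\<alpha>\<in>Field kap. \<forall>n. f \<alpha> n \<in> underS lam (ln n)) \<and>
        ideal_nat I \<and> (\<forall>A. finite A \<longrightarrow> A \<in> I) \<and>
        (\<forall>\<alpha>\<in>Field kap. \<forall>\<beta>\<in>Field kap. \<alpha> \<noteq> \<beta> \<and> (\<alpha>, \<beta>) \<in> kap \<longrightarrow> less_mod lam I (f \<alpha>) (f \<beta>)) \<and>
        (\<forall>g. (\<forall>n. g n \<in> underS lam (ln n)) \<longrightarrow> (\<exists>\<alpha>\<in>Field kap. less_mod lam I g (f \<alpha>))))"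

text \<open>Points of T_lam: finite sequences and tops (sequences of length omega).\<close>
datatype 'a tnode = Fin "'a list" | Top "nat \<Rightarrow> 'a"

fun tless :: "'a tnode \<Rightarrow> 'a tnode \<Rightarrow> bool" where
  "tless (Fin xs) (Fin ys) \<longleftrightarrow> strict_prefix xs ys"
| "tless (Fin xs) (Top g) \<longleftrightarrow> xs = map g [0..<length xs]"
| "tless (Top g) _ \<longleftrightarrow> False"

definition tle :: "'a tnode \<Rightarrow> 'a tnode \<Rightarrow> bool" where
  "tle s t \<longleftrightarrow> tless s t \<or> s = t"

definition scale_tops :: "'k rel \<Rightarrow> ('k \<Rightarrow> nat \<Rightarrow> 'a) \<Rightarrow> 'a tnode set" where
  "scale_tops kap f = (\<lambda>\<alpha>. Top (f \<alpha>)) ` Field kap"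

definition down_closure :: "'a tnode set \<Rightarrow> 'a tnode set" where
  "down_closure X = {s. \<exists>t\<in>X. tle s t}"

definition is_T_graph :: "'a tnode set \<Rightarrow> ('a tnode \<Rightarrow> 'a tnode \<Rightarrow> bool) \<Rightarrow> bool" where
  "is_T_graph T E \<longleftrightarrow>
     (\<forall>u v. E u v \<longrightarrow> u \<in> T \<and> v \<in> T) \<and>
     (\<forall>u v. E u v \<longrightarrow> E v u) \<and> (\<forall>u. \<not> E u u) \<and>
     (\<forall>u v. E u v \<longrightarrow> tless u v \<or> tless v u) \<and>
     (\<forall>t\<in>T. \<forall>s. tless s t \<longrightarrow> (\<exists>u. tle s u \<and> tless u t \<and> E u t))"

definition is_bip_graph :: "'c rel \<Rightarrow> 'd rel \<Rightarrow> 'v set \<Rightarrow> 'v set \<Rightarrow> ('v \<Rightarrow> 'v \<Rightarrow> bool) \<Rightarrow> bool" where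
  "is_bip_graph mu nu A B E \<longleftrightarrow> (card_of A, mu) \<in> ordIso \<and> (card_of B, nu) \<in> ordIso \<and>
     (\<forall>b\<in>B. infinite {a\<in>A. E a b})"

end

(*
  For infinitely many n the n-th coordinates of the scale are cofinal in the regular cardinal
  \<lambda>_n: otherwise a function g bounding them on all other levels would not be dominated mod I
  by any f_\<alpha>. On these levels T already has \<lambda>_n nodes, and such \<lambda>_n are cofinal in \<lambda>, so
  T^{<\<omega>} has size \<lambda>. A top has infinitely many neighbours below it since they are cofinal.

  Conversely, a countable C has countably many entries on each level n, bounded in the regular
  uncountable \<lambda>_n by some g(n). Take g <_I f_\<alpha>. For \<beta> \<ge> \<alpha> also g <_I f_\<beta>, so f_\<beta>(n) > g(n) for
  some n; then f_\<beta>(n) is no entry of C, and only the finitely many nodes of C of length at most n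
  can lie below f_\<beta>. So fewer than \<kappa> tops have infinitely many neighbours in C.
*)

theory Submission
  imports Defs "HOL-Library.Countable_Set_Type"
begin

unbundle cardinal_syntax

lemma Well_order_underS_if_not_le:
  assumes "Well_order r" "a \<in> Field r" "b \<in> Field r" "(a, b) \<notin> r"
  shows "b \<in> underS r a"
  using assms wo_rel.TOTALS[of r] unfolding wo_rel_def underS_def by blast

lemma Well_order_le_underS_trans:
  assumes "Well_order r" "(a, b) \<in> r" "b \<in> underS r c"
  shows "a \<in> underS r c"
  using assms wo_rel.TRANS[of r] wo_rel.ANTISYM[of r]
  unfolding wo_rel_def underS_def trans_def antisym_def by blast

lemma Well_order_underS_mono:
  assumes "Well_order r" "(a, b) \<in> r"
  shows "underS r a \<subseteq> underS r b"
  using assms underS_incr[of r a b] unfolding order_on_defs by blast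

lemma Field_Restr_underS:
  assumes "Well_order r"
  shows "Field (Restr r (underS r x)) = underS r x"
  by (rule Refl_Field_Restr2[OF _ Order_Relation.underS_Field]) (use assms in \<open>simp add: order_on_defs\<close>)

lemma reg_uncountable_card_pt_no_max:
  assumes "Well_order lam" "reg_uncountable_card_pt lam x" "a \<in> underS lam x"
  shows "\<exists>b\<in>underS lam x. a \<in> underS lam b"
proof -
  let ?R = "Restr lam (underS lam x)"
  have F: "Field ?R = underS lam x"
    using Field_Restr_underS[OF assms(1)] .
  have "Card_order ?R" "infinite (Field ?R)"
    using assms(2) countable_finite unfolding reg_uncountable_card_pt_def F by blast+
  then have "Field ?R \<noteq> under ?R a"
    using Card_order_infinite_not_under by blast
  then obtain b where b: "b \<in> underS lam x" "(b, a) \<notin> ?R"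
    using under_Field[of ?R a] unfolding F under_def by blast
  then have "(b, a) \<notin> lam"
    using assms(3) by blast
  moreover have "a \<in> Field lam" "b \<in> Field lam"
    using assms(3) b(1) Order_Relation.underS_Field by fast+
  ultimately show ?thesis
    using Well_order_underS_if_not_le[OF assms(1)] b(1) by blast
qed

lemma reg_uncountable_card_pt_cofinal_card:
  assumes "Well_order lam" "reg_uncountable_card_pt lam x" "V \<subseteq> underS lam x"
    and "\<And>a. a \<in> underS lam x \<Longrightarrow> \<exists>v\<in>V. a \<in> underS lam v"
  shows "|underS lam x| \<le>o |V|"
proof -
  let ?R = "Restr lam (underS lam x)"
  have Field_R: "Field ?R = underS lam x"
    using Field_Restr_underS[OF assms(1)] .
  have "cofinal V ?R"
    using assms(3,4) unfolding cofinal_def Field_R by (fastforce simp: underS_def)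
  then have "|V| =o ?R"
    using assms(2,3) unfolding reg_uncountable_card_pt_def regularCard_def Field_R by blast
  moreover have "|underS lam x| =o ?R"
    using card_of_Field_ordIso[of ?R] assms(2) Field_R
    unfolding reg_uncountable_card_pt_def by simp
  ultimately show ?thesis
    using ordIso_iff_ordLeq ordIso_symmetric ordIso_transitive by meson
qed

lemma reg_uncountable_card_pt_countable_bounded:
  assumes "Well_order lam" "reg_uncountable_card_pt lam x"
    and "S \<subseteq> underS lam x" "countable S"
  shows "\<exists>g\<in>underS lam x. S \<subseteq> underS lam g"
proof (rule ccontr)
  assume unbounded: "\<not> ?thesis"
  have "|underS lam x| \<le>o |S|"
  proof (rule reg_uncountable_card_pt_cofinal_card[OF assms(1-3)])
    fix a assume a: "a \<in> underS lam x"
    then obtain b where b: "b \<in> underS lam x" "a \<in> underS lam b"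
      using reg_uncountable_card_pt_no_max[OF assms(1,2)] by blast
    then obtain v where "v \<in> S" "v \<notin> underS lam b"
      using unbounded by blast
    then have "(b, v) \<in> lam"
      using b assms(1,3) Well_order_underS_if_not_le Order_Relation.underS_Field by fast
    then show "\<exists>v\<in>S. a \<in> underS lam v"
      using b \<open>v \<in> S\<close> Well_order_underS_mono[OF assms(1)] by blast
  qed
  then have "countable (underS lam x)"
    using assms(4) countable_card_of_nat ordLeq_transitive by blast
  then show False
    using assms(2) unfolding reg_uncountable_card_pt_def by blast
qed

lemma card_of_lists_le_infinite:
  assumes "infinite F"
  shows "|lists F| \<le>o |F|"
proof -
  define L where "L n = {xs \<in> lists F. length xs = n}" for n
  have "|L n| \<le>o |F|" for n
  proof (induction n)
    case 0
    have "L 0 = {[]}" unfolding L_def by auto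
    then show ?case using card_of_singl_ordLeq assms infinite_imp_nonempty by metis
  next
    case (Suc n)
    have "L (Suc n) = (\<lambda>(x, xs). x # xs) ` (F \<times> L n)"
      unfolding L_def by (auto simp: image_iff length_Suc_conv)
    then have "|L (Suc n)| \<le>o |F \<times> L n|"
      using card_of_image by metis
    also have "|F \<times> L n| \<le>o |F \<times> F|"
      using card_of_Times_mono2[OF Suc.IH] .
    also have "|F \<times> F| =o |F|"
      using card_of_Times_same_infinite[OF assms] .
    finally show ?case .
  qed
  moreover have "|UNIV :: nat set| \<le>o |F|"
    using assms infinite_iff_card_of_nat by blast
  moreover have "lists F = (\<Union>n\<in>UNIV. L n)" unfolding L_def by auto
  ultimately show ?thesis
    using card_of_UNION_ordLeq_infinite[OF assms] by metis
qed

lemma ideal_nat_Un: "ideal_nat I \<Longrightarrow> A \<in> I \<Longrightarrow> B \<in> I \<Longrightarrow> A \<union> B \<in> I"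
  unfolding ideal_nat_def by blast

lemma ideal_nat_subset: "ideal_nat I \<Longrightarrow> A \<in> I \<Longrightarrow> B \<subseteq> A \<Longrightarrow> B \<in> I"
  unfolding ideal_nat_def by blast

lemma ideal_nat_UNIV_notin: "ideal_nat I \<Longrightarrow> UNIV \<notin> I"
proof
  assume I: "ideal_nat I" and "UNIV \<in> I"
  then have "B \<in> I" for B
    unfolding ideal_nat_def by (meson subset_UNIV)
  then have "I = Pow UNIV" by blast
  then show False
    using I unfolding ideal_nat_def by blast
qed

lemma not_less_mod_if_ge_outside:
  assumes "ideal_nat I" "N \<in> I" "\<And>n. n \<notin> N \<Longrightarrow> (h n, g n) \<in> lam"
  shows "\<not> less_mod lam I g h"
proof
  assume "less_mod lam I g h"
  then have "N \<union> {n. (h n, g n) \<in> lam} \<in> I"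
    unfolding less_mod_def by (rule ideal_nat_Un[OF assms(1,2)])
  moreover have "N \<union> {n. (h n, g n) \<in> lam} = UNIV"
    using assms(3) by blast
  ultimately show False
    using ideal_nat_UNIV_notin[OF assms(1)] by simp
qed

lemma less_mod_trans:
  assumes "Well_order lam" "ideal_nat I"
    and "\<And>n. g n \<in> Field lam" "\<And>n. h n \<in> Field lam"
    and "less_mod lam I g h" "less_mod lam I h k"
  shows "less_mod lam I g k"
proof -
  have "(k n, h n) \<in> lam" if kg: "(k n, g n) \<in> lam" and "(h n, g n) \<notin> lam" for n
  proof -
    have "g n \<in> underS lam (h n)"
      using Well_order_underS_if_not_le[OF assms(1,4,3)] that(2) .
    then show ?thesis
      using Well_order_le_underS_trans[OF assms(1) kg] unfolding underS_def by blast
  qed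
  then have "{n. (k n, g n) \<in> lam} \<subseteq> {n. (h n, g n) \<in> lam} \<union> {n. (k n, h n) \<in> lam}"
    by blast
  moreover have "{n. (h n, g n) \<in> lam} \<union> {n. (k n, h n) \<in> lam} \<in> I"
    using ideal_nat_Un[OF assms(2)] assms(5,6) unfolding less_mod_def .
  ultimately show ?thesis
    using ideal_nat_subset[OF assms(2)] unfolding less_mod_def by blast
qed

lemma Fin_in_down_closure_scale_tops:
  "Fin xs \<in> down_closure (scale_tops kap f) \<longleftrightarrow> (\<exists>\<alpha>\<in>Field kap. xs = map (f \<alpha>) [0..<length xs])"
  unfolding down_closure_def scale_tops_def tle_def by auto

lemma scale_tops_subset_down_closure: "scale_tops kap f \<subseteq> down_closure (scale_tops kap f)"
  unfolding down_closure_def tle_def by blast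

lemma T_graph_edge_vertices: "is_T_graph T E \<Longrightarrow> E u v \<Longrightarrow> u \<in> T \<and> v \<in> T"
  unfolding is_T_graph_def by blast

lemma T_graph_edge_comparable: "is_T_graph T E \<Longrightarrow> E u v \<Longrightarrow> tless u v \<or> tless v u"
  unfolding is_T_graph_def by blast

lemma T_graph_lower_neighbour:
  "is_T_graph T E \<Longrightarrow> t \<in> T \<Longrightarrow> tless s t \<Longrightarrow> \<exists>u. tle s u \<and> tless u t \<and> E u t"
  unfolding is_T_graph_def by blast

lemma T_graph_Top_infinite_Fin_neighbours:
  assumes "is_T_graph T E" "Top g \<in> T"
  shows "infinite {a \<in> {s \<in> T. \<exists>xs. s = Fin xs}. E a (Top g)}"
proof
  let ?N = "{a \<in> {s \<in> T. \<exists>xs. s = Fin xs}. E a (Top g)}"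
  assume "finite ?N"
  then have "finite (length ` (Fin -` ?N))"
    using finite_vimageI[of ?N Fin] by (simp add: inj_def)
  then obtain K where K: "\<forall>m\<in>length ` (Fin -` ?N). m \<le> K"
    unfolding finite_nat_set_iff_bounded_le ..
  have "tless (Fin (map g [0..<Suc K])) (Top g)" by simp
  then obtain u where u: "tle (Fin (map g [0..<Suc K])) u" "tless u (Top g)" "E u (Top g)"
    using T_graph_lower_neighbour[OF assms] by blast
  then obtain ys where ys: "u = Fin ys" "Suc K \<le> length ys"
    by (cases u) (auto simp: tle_def strict_prefix_def dest: prefix_length_le)
  then have "u \<in> ?N"
    using u(3) T_graph_edge_vertices[OF assms(1)] by blast
  then have "length ys \<le> K"
    using K ys(1) by blast
  then show False
    using ys(2) by simp
qed

definition level_entries :: "'a tnode set \<Rightarrow> nat \<Rightarrow> 'a set" where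
  "level_entries C n = {xs ! n | xs. Fin xs \<in> C \<and> n < length xs}"

lemma card_of_level_entries_le: "|level_entries C n| \<le>o |C|"
proof -
  have "level_entries C n \<subseteq> (\<lambda>s. case s of Fin xs \<Rightarrow> xs ! n | Top g \<Rightarrow> g n) ` C"
    unfolding level_entries_def by force
  then show ?thesis
    using card_of_mono1 card_of_image ordLeq_transitive by metis
qed

lemma finite_Fin_predecessors_if_not_level_entry:
  assumes "h n \<notin> level_entries C n"
  shows "finite {a \<in> C. tless a (Top h)}"
proof (rule finite_subset)
  show "{a \<in> C. tless a (Top h)} \<subseteq> (\<lambda>k. Fin (map h [0..<k])) ` {..n}"
  proof
    fix a assume a: "a \<in> {a \<in> C. tless a (Top h)}"
    then obtain xs where xs: "a = Fin xs" "xs = map h [0..<length xs]"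
      by (cases a) auto
    have "length xs \<le> n"
    proof (rule ccontr)
      assume "\<not> length xs \<le> n"
      then have "n < length xs" by simp
      moreover have "xs ! n = h n"
        using calculation xs(2) by (metis add_0 diff_zero nth_map_upt)
      moreover have "Fin xs \<in> C"
        using a xs(1) by blast
      ultimately show False
        using assms unfolding level_entries_def by force
    qed
    then show "a \<in> (\<lambda>k. Fin (map h [0..<k])) ` {..n}"
      using xs by blast
  qed
qed simp

locale kappa_scale =
  fixes lam :: "'a rel" and kap :: "'k rel" and f :: "'k \<Rightarrow> nat \<Rightarrow> 'a"
    and ln :: "nat \<Rightarrow> 'a" and I :: "nat set set"
  assumes lam_card: "Card_order lam" and kap_card: "Card_order kap"
    and ln_reg: "reg_uncountable_card_pt lam (ln n)"
    and ln_increasing: "ln n \<in> underS lam (ln (Suc n))"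
    and ln_cofinal: "a \<in> Field lam \<Longrightarrow> \<exists>n. (a, ln n) \<in> lam"
    and f_below_ln: "\<alpha> \<in> Field kap \<Longrightarrow> f \<alpha> n \<in> underS lam (ln n)"
    and ideal: "ideal_nat I" and finite_in_ideal: "finite N \<Longrightarrow> N \<in> I"
    and f_increasing: "\<lbrakk>\<alpha> \<in> Field kap; \<beta> \<in> Field kap; \<alpha> \<noteq> \<beta>; (\<alpha>, \<beta>) \<in> kap\<rbrakk>
      \<Longrightarrow> less_mod lam I (f \<alpha>) (f \<beta>)"
    and f_dominating: "(\<And>n. g n \<in> underS lam (ln n)) \<Longrightarrow> \<exists>\<alpha>\<in>Field kap. less_mod lam I g (f \<alpha>)"

lemma is_scaleE:
  assumes "is_scale lam kap f" "Card_order lam" "Card_order kap"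
  obtains ln I where "kappa_scale lam kap f ln I"
proof -
  from assms(1) obtain ln I where
    "\<forall>n. reg_uncountable_card_pt lam (ln n)" "\<forall>n. ln n \<in> underS lam (ln (Suc n))"
    "\<forall>a\<in>Field lam. \<exists>n. (a, ln n) \<in> lam" "\<forall>\<alpha>\<in>Field kap. \<forall>n. f \<alpha> n \<in> underS lam (ln n)"
    "ideal_nat I" "\<forall>A. finite A \<longrightarrow> A \<in> I"
    "\<forall>\<alpha>\<in>Field kap. \<forall>\<beta>\<in>Field kap. \<alpha> \<noteq> \<beta> \<and> (\<alpha>, \<beta>) \<in> kap \<longrightarrow> less_mod lam I (f \<alpha>) (f \<beta>)"
    "\<forall>g. (\<forall>n. g n \<in> underS lam (ln n)) \<longrightarrow> (\<exists>\<alpha>\<in>Field kap. less_mod lam I g (f \<alpha>))"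
    unfolding is_scale_def by (elim exE conjE) (rule that; assumption)
  then have "kappa_scale lam kap f ln I"
    using assms(2,3) by unfold_locales blast+
  then show thesis ..
qed

context kappa_scale
begin

abbreviation fin_nodes :: "'a tnode set" where
  "fin_nodes \<equiv> {s \<in> down_closure (scale_tops kap f). \<exists>xs. s = Fin xs}"

lemma lam_wo: "Well_order lam"
  using lam_card card_order_on_well_order_on by blast

lemma kap_wo: "Well_order kap"
  using kap_card card_order_on_well_order_on by blast

lemma f_in_Field: "\<alpha> \<in> Field kap \<Longrightarrow> f \<alpha> n \<in> Field lam"
  using f_below_ln Order_Relation.underS_Field by fast

lemma less_mod_scale_mono:
  assumes "\<And>n. g n \<in> Field lam" "less_mod lam I g (f \<alpha>)"
    and "\<alpha> \<in> Field kap" "\<beta> \<in> Field kap" "(\<alpha>, \<beta>) \<in> kap"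
  shows "less_mod lam I g (f \<beta>)"
proof (cases "\<alpha> = \<beta>")
  case True
  then show ?thesis
    using assms(2) by simp
next
  case False
  then have "less_mod lam I (f \<alpha>) (f \<beta>)"
    using f_increasing assms(3-5) by blast
  then show ?thesis
    using less_mod_trans[OF lam_wo ideal assms(1) f_in_Field[OF assms(3)] assms(2)] by blast
qed

lemma not_less_mod_if_le: "(\<And>n. (h n, g n) \<in> lam) \<Longrightarrow> \<not> less_mod lam I g h"
  using not_less_mod_if_ge_outside[OF ideal finite_in_ideal[OF finite.emptyI]] by blast

lemma inj_on_f: "inj_on f (Field kap)"
proof (rule inj_onI, rule ccontr)
  fix \<alpha> \<beta> assume \<alpha>\<beta>: "\<alpha> \<in> Field kap" "\<beta> \<in> Field kap" "f \<alpha> = f \<beta>" "\<alpha> \<noteq> \<beta>"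
  have "less_mod lam I (f \<alpha>) (f \<beta>) \<or> less_mod lam I (f \<beta>) (f \<alpha>)"
  proof (cases "(\<alpha>, \<beta>) \<in> kap")
    case True
    then show ?thesis
      using f_increasing \<alpha>\<beta> by blast
  next
    case False
    then have "(\<beta>, \<alpha>) \<in> kap"
      using Well_order_underS_if_not_le[OF kap_wo \<alpha>\<beta>(1,2)] unfolding underS_def by blast
    then show ?thesis
      using f_increasing[OF \<alpha>\<beta>(2,1)] \<alpha>\<beta>(4) by blast
  qed
  then have "less_mod lam I (f \<alpha>) (f \<alpha>)"
    using \<alpha>\<beta>(3) by auto
  moreover have "(f \<alpha> n, f \<alpha> n) \<in> lam" for n
    using lam_wo f_in_Field[OF \<alpha>\<beta>(1)] unfolding order_on_defs refl_on_def by blast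
  ultimately show False
    using not_less_mod_if_le by blast
qed

lemma card_of_scale_tops: "|scale_tops kap f| =o kap"
proof -
  have "bij_betw (\<lambda>\<alpha>. Top (f \<alpha>)) (Field kap) (scale_tops kap f)"
    using inj_on_f unfolding scale_tops_def bij_betw_def inj_on_def by auto
  then show ?thesis
    using card_of_ordIso card_of_Field_ordIso[OF kap_card] ordIso_symmetric ordIso_transitive
    by blast
qed

lemma Field_lam_infinite: "infinite (Field lam)"
proof -
  have "infinite (underS lam (ln 0))"
    using ln_reg[of 0] countable_finite unfolding reg_uncountable_card_pt_def by blast
  then show ?thesis
    by (rule infinite_super[OF Order_Relation.underS_Field])
qed

lemma card_of_fin_nodes_le: "|fin_nodes| \<le>o |Field lam|"
proof -
  have "fin_nodes \<subseteq> Fin ` lists (Field lam)"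
  proof
    fix s assume "s \<in> fin_nodes"
    then obtain xs where xs: "s = Fin xs" "Fin xs \<in> down_closure (scale_tops kap f)"
      by blast
    then obtain \<alpha> where \<alpha>: "\<alpha> \<in> Field kap" "xs = map (f \<alpha>) [0..<length xs]"
      unfolding Fin_in_down_closure_scale_tops by blast
    have "set (map (f \<alpha>) [0..<length xs]) \<subseteq> Field lam"
      using f_in_Field[OF \<alpha>(1)] by auto
    then have "xs \<in> lists (Field lam)"
      using arg_cong[OF \<alpha>(2), of set] by (simp add: in_lists_conv_set subset_iff)
    then show "s \<in> Fin ` lists (Field lam)"
      using xs(1) by blast
  qed
  then have "|fin_nodes| \<le>o |Fin ` lists (Field lam)|"
    by (rule card_of_mono1)
  also have "|Fin ` lists (Field lam)| \<le>o |lists (Field lam)|"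
    by (rule card_of_image)
  also have "|lists (Field lam)| \<le>o |Field lam|"
    by (rule card_of_lists_le_infinite[OF Field_lam_infinite])
  finally show ?thesis .
qed

definition cofinal_levels :: "nat set" where
  "cofinal_levels = {n. \<forall>\<gamma>\<in>underS lam (ln n). \<exists>\<alpha>\<in>Field kap. \<gamma> \<in> underS lam (f \<alpha> n)}"

lemma infinite_cofinal_levels: "infinite cofinal_levels"
proof
  assume fin: "finite cofinal_levels"
  have "\<exists>\<gamma>\<in>underS lam (ln n). n \<notin> cofinal_levels \<longrightarrow> (\<forall>\<alpha>\<in>Field kap. (f \<alpha> n, \<gamma>) \<in> lam)" for n
  proof (cases "n \<in> cofinal_levels")
    case True
    have "underS lam (ln n) \<noteq> {}"
      using ln_reg[of n] unfolding reg_uncountable_card_pt_def by auto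
    then show ?thesis
      using True by blast
  next
    case False
    then obtain \<gamma> where \<gamma>: "\<gamma> \<in> underS lam (ln n)" "\<forall>\<alpha>\<in>Field kap. \<gamma> \<notin> underS lam (f \<alpha> n)"
      unfolding cofinal_levels_def by blast
    have "(f \<alpha> n, \<gamma>) \<in> lam" if "\<alpha> \<in> Field kap" for \<alpha>
      using Well_order_underS_if_not_le[OF lam_wo f_in_Field[OF that]
          subsetD[OF Order_Relation.underS_Field \<gamma>(1)]] \<gamma>(2) that
      by blast
    then show ?thesis
      using \<gamma>(1) by blast
  qed
  then obtain g where g: "\<And>n. g n \<in> underS lam (ln n)"
    "\<And>n. n \<notin> cofinal_levels \<Longrightarrow> \<forall>\<alpha>\<in>Field kap. (f \<alpha> n, g n) \<in> lam"
    by metis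
  then obtain \<alpha> where "\<alpha> \<in> Field kap" "less_mod lam I g (f \<alpha>)"
    using f_dominating by blast
  then show False
    using not_less_mod_if_ge_outside[OF ideal finite_in_ideal[OF fin]] g(2) by blast
qed

lemma card_of_underS_ln_le_fin_nodes:
  assumes "n \<in> cofinal_levels"
  shows "|underS lam (ln n)| \<le>o |fin_nodes|"
proof -
  have "|underS lam (ln n)| \<le>o |level_entries fin_nodes n \<inter> underS lam (ln n)|"
  proof (rule reg_uncountable_card_pt_cofinal_card[OF lam_wo ln_reg])
    fix a assume "a \<in> underS lam (ln n)"
    then obtain \<alpha> where \<alpha>: "\<alpha> \<in> Field kap" "a \<in> underS lam (f \<alpha> n)"
      using assms unfolding cofinal_levels_def by blast
    let ?xs = "map (f \<alpha>) [0..<Suc n]"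
    have "Fin ?xs \<in> fin_nodes"
      using \<alpha>(1) by (auto simp: Fin_in_down_closure_scale_tops)
    moreover have "?xs ! n = f \<alpha> n" "n < length ?xs"
      by (simp_all del: upt_Suc)
    ultimately have "f \<alpha> n \<in> level_entries fin_nodes n"
      unfolding level_entries_def by (metis (mono_tags, lifting) mem_Collect_eq)
    then show "\<exists>v\<in>level_entries fin_nodes n \<inter> underS lam (ln n). a \<in> underS lam v"
      using \<alpha> f_below_ln by blast
  qed simp
  also have "|level_entries fin_nodes n \<inter> underS lam (ln n)| \<le>o |fin_nodes|"
    using card_of_mono1[OF Int_lower1] card_of_level_entries_le ordLeq_transitive by blast
  finally show ?thesis .
qed

lemma Field_subset_UN_underS_ln:
  assumes "infinite N"
  shows "Field lam \<subseteq> (\<Union>n\<in>N. underS lam (ln n))"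
proof
  fix a assume "a \<in> Field lam"
  then obtain n where "(a, ln n) \<in> lam"
    using ln_cofinal by blast
  then have a: "a \<in> underS lam (ln (Suc n))"
    using Well_order_le_underS_trans[OF lam_wo _ ln_increasing] by blast
  obtain m where m: "m \<in> N" "Suc n \<le> m"
    using assms infinite_nat_iff_unbounded_le by blast
  have step: "underS lam (ln k) \<subseteq> underS lam (ln (Suc k))" for k
    using Well_order_underS_mono[OF lam_wo] ln_increasing unfolding underS_def by blast
  have "underS lam (ln (Suc n)) \<subseteq> underS lam (ln m)"
    using lift_Suc_mono_le[of "\<lambda>k. underS lam (ln k)", OF step m(2)] .
  then show "a \<in> (\<Union>n\<in>N. underS lam (ln n))"
    using a m(1) by blast
qed

lemma card_of_fin_nodes: "|fin_nodes| =o lam"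
proof -
  obtain n0 where "n0 \<in> cofinal_levels"
    using infinite_cofinal_levels infinite_imp_nonempty by blast
  then have inf: "infinite fin_nodes"
    using card_of_underS_ln_le_fin_nodes card_of_ordLeq_infinite ln_reg countable_finite
    unfolding reg_uncountable_card_pt_def by blast
  then have "|cofinal_levels| \<le>o |fin_nodes|"
    using infinite_iff_card_of_nat card_of_mono1[of cofinal_levels UNIV] ordLeq_transitive by blast
  then have "|\<Union>n\<in>cofinal_levels. underS lam (ln n)| \<le>o |fin_nodes|"
    using card_of_underS_ln_le_fin_nodes by (intro card_of_UNION_ordLeq_infinite[OF inf]) blast+
  then have "|Field lam| \<le>o |fin_nodes|"
    using card_of_mono1[OF Field_subset_UN_underS_ln[OF infinite_cofinal_levels]] ordLeq_transitive
    by blast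
  then show ?thesis
    using card_of_fin_nodes_le card_of_Field_ordIso[OF lam_card] ordIso_iff_ordLeq
      ordLeq_ordIso_trans ordIso_transitive by blast
qed

lemma card_of_tops_through_countable_less:
  assumes "countable C" "D \<subseteq> scale_tops kap f"
    and "\<And>b. b \<in> D \<Longrightarrow> infinite {a \<in> C. tless a b}"
  shows "|D| <o kap"
proof -
  have "countable (level_entries C n \<inter> underS lam (ln n))" for n
    using assms(1) card_of_level_entries_le countable_card_of_nat countable_subset[OF Int_lower1]
      ordLeq_transitive by metis
  then have "\<exists>\<gamma>\<in>underS lam (ln n). level_entries C n \<inter> underS lam (ln n) \<subseteq> underS lam \<gamma>" for n
    using reg_uncountable_card_pt_countable_bounded[OF lam_wo ln_reg] by blast
  then obtain g where g: "\<And>n. g n \<in> underS lam (ln n)"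
    "\<And>n. level_entries C n \<inter> underS lam (ln n) \<subseteq> underS lam (g n)"
    by metis
  then obtain \<alpha> where \<alpha>: "\<alpha> \<in> Field kap" "less_mod lam I g (f \<alpha>)"
    using f_dominating by blast
  have "D \<subseteq> (\<lambda>\<beta>. Top (f \<beta>)) ` underS kap \<alpha>"
  proof
    fix d assume "d \<in> D"
    then obtain \<beta> where \<beta>: "\<beta> \<in> Field kap" "d = Top (f \<beta>)"
      using assms(2) unfolding scale_tops_def by blast
    have "f \<beta> n \<in> level_entries C n" for n
      using finite_Fin_predecessors_if_not_level_entry assms(3)[OF \<open>d \<in> D\<close>] \<beta>(2) by blast
    then have "(f \<beta> n, g n) \<in> lam" for n
      using g(2) f_below_ln[OF \<beta>(1)] unfolding underS_def by blast
    then have "\<not> less_mod lam I g (f \<beta>)"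
      using not_less_mod_if_le by blast
    then have "(\<alpha>, \<beta>) \<notin> kap"
      using less_mod_scale_mono[OF subsetD[OF Order_Relation.underS_Field g(1)] \<alpha>(2,1) \<beta>(1)] by blast
    then show "d \<in> (\<lambda>\<beta>. Top (f \<beta>)) ` underS kap \<alpha>"
      using Well_order_underS_if_not_le[OF kap_wo \<alpha>(1) \<beta>(1)] \<beta>(2) by blast
  qed
  then have "|D| \<le>o |underS kap \<alpha>|"
    using ordLeq_transitive[OF card_of_mono1 card_of_image] by blast
  then show ?thesis
    using card_of_underS[OF kap_card \<alpha>(1)] ordLeq_ordLess_trans by blast
qed

lemma T_graph_is_bip_graph:
  assumes "is_T_graph (down_closure (scale_tops kap f)) E"
  shows "is_bip_graph lam kap fin_nodes (scale_tops kap f) E"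
  unfolding is_bip_graph_def
  using card_of_fin_nodes card_of_scale_tops scale_tops_subset_down_closure
    T_graph_Top_infinite_Fin_neighbours[OF assms]
  by (fastforce simp: scale_tops_def)

lemma no_aleph0_kappa_subgraph:
  assumes "is_T_graph (down_closure (scale_tops kap f)) E"
    and "D \<subseteq> scale_tops kap f" "is_bip_graph natLeq kap C D E"
  shows False
proof -
  have "countable C" "|D| =o kap"
    using assms(3) countable_card_le_natLeq ordIso_iff_ordLeq unfolding is_bip_graph_def by blast+
  moreover have "infinite {a \<in> C. tless a b}" if "b \<in> D" for b
  proof -
    have "{a \<in> C. E a b} \<subseteq> {a \<in> C. tless a b}"
      using T_graph_edge_comparable[OF assms(1)] assms(2) that unfolding scale_tops_def by fastforce
    then show ?thesis
      using assms(3) that finite_subset unfolding is_bip_graph_def by blast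
  qed
  ultimately show False
    using card_of_tops_through_countable_less[OF _ assms(2)] not_ordLess_ordIso by blast
qed

end

theorem proposition7p4:
  fixes lam :: "'a rel" and kap :: "'k rel" and f :: "'k \<Rightarrow> nat \<Rightarrow> 'a"
    and E :: "'a tnode \<Rightarrow> 'a tnode \<Rightarrow> bool"
  assumes lam_card: "Card_order lam" and lam_inf: "infinite (Field lam)"
    and lam_sing: "\<not> regularCard lam"
    and lam_cof: "\<exists>K. K \<subseteq> Field lam \<and> countable K \<and> cofinal K lam"
    and kap_card: "Card_order kap" and kap_reg: "regularCard kap"
    and lam_less_kap: "(lam, kap) \<in> ordLess"
    and scale: "is_scale lam kap f"
    and Tgraph: "is_T_graph (down_closure (scale_tops kap f)) E"
  shows "is_bip_graph lam kap
           {s \<in> down_closure (scale_tops kap f). \<exists>xs. s = Fin xs}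
           (scale_tops kap f) E
       \<and> \<not> (\<exists>C D. C \<subseteq> {s \<in> down_closure (scale_tops kap f). \<exists>xs. s = Fin xs}
                \<and> D \<subseteq> scale_tops kap f \<and> is_bip_graph natLeq kap C D E)"
proof -
  obtain ln I where "kappa_scale lam kap f ln I"
    using is_scaleE[OF scale lam_card kap_card] .
  then interpret kappa_scale lam kap f ln I .
  show ?thesis
    using T_graph_is_bip_graph[OF Tgraph] no_aleph0_kappa_subgraph[OF Tgraph] by blast
qed

end
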